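(* For every $n\in\mathbb{N}$ and positive integer $m$, the number of divisors of $\{0,1,\ldots,n\}$ of cardinality exactly $m$ equals the number of headstrong compositions of $n+1$ with exactly $m$ parts.
   Context: A set $B\subseteq\mathbb{N}=\{0,1,\ldots\}$ is a divisor of $A$ if $B+C=A$ for some $C\subseteq\mathbb{N}$, where $B+C=\{b+c:b\in B,c\in C\}$. A composition of a positive integer $N$ is an ordered tuple $(c_1,\ldots,c_m)$ of positive integers summing to $N$ ($m$ parts); it is headstrong if $c_1\ge c_i$ for all $i$. *)

theory Defs
  imports Main
begin

definition sumset :: "nat set \<Rightarrow> nat set \<Rightarrow> nat set" where
  "sumset B C = {b + c | b c. b \<in> B \<and> c \<in> C}"

definition is_divisor :: "nat set \<Rightarrow> nat set \<Rightarrow> bool" where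
  "is_divisor B A \<longleftrightarrow> (\<exists>C. sumset B C = A)"

definition is_composition :: "nat \<Rightarrow> nat list \<Rightarrow> bool" where
  "is_composition N cs \<longleftrightarrow> (\<forall>c\<in>set cs. 0 < c) \<and> sum_list cs = N"

definition headstrong :: "nat list \<Rightarrow> bool" where
  "headstrong cs \<longleftrightarrow> cs \<noteq> [] \<and> (\<forall>i<length cs. cs ! i \<le> cs ! 0)"

end

theory Submission
  imports Defs
begin

text \<open>
  If \<open>B + C = {0..n}\<close>, then \<open>0 \<in> B\<close>, and with \<open>K = max B\<close> every element of \<open>C\<close> is at most
  \<open>n - K\<close>; hence already \<open>B + {0..<h} = {0..n}\<close> for \<open>h = n + 1 - K\<close>, which holds exactly when
  consecutive elements of \<open>B\<close> differ by at most \<open>h\<close>. So listing \<open>h\<close> followed by the gaps of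
  \<open>B\<close> gives a headstrong composition of \<open>n + 1\<close> with \<open>card B\<close> parts, and conversely a
  headstrong composition \<open>(h, c\<^sub>2, \<dots>, c\<^sub>m)\<close> yields the divisor of prefix sums of
  \<open>(c\<^sub>2, \<dots>, c\<^sub>m)\<close>.
\<close>

fun prefix_sums :: "nat list \<Rightarrow> nat list" where
  "prefix_sums [] = [0]"
| "prefix_sums (x # xs) = 0 # map ((+) x) (prefix_sums xs)"

lemma length_prefix_sums [simp]: "length (prefix_sums xs) = Suc (length xs)"
  by (induction xs) auto

lemma prefix_sums_neq_Nil [simp]: "prefix_sums xs \<noteq> []"
  by (cases xs) auto

lemma hd_prefix_sums [simp]: "hd (prefix_sums xs) = 0"
  by (cases xs) auto

lemma zero_in_set_prefix_sums [simp]: "0 \<in> set (prefix_sums xs)"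
  by (cases xs) auto

lemma set_prefix_sums_Cons:
  "set (prefix_sums (x # xs)) = insert 0 ((+) x ` set (prefix_sums xs))"
  by simp

lemma set_prefix_sums_le_sum_list: "y \<in> set (prefix_sums xs) \<Longrightarrow> y \<le> sum_list xs"
  by (induction xs arbitrary: y) auto

lemma sum_list_in_set_prefix_sums: "sum_list xs \<in> set (prefix_sums xs)"
  by (induction xs) auto

lemma inj_prefix_sums: "inj prefix_sums"
proof (rule injI)
  fix xs ys :: "nat list"
  assume "prefix_sums xs = prefix_sums ys"
  then show "xs = ys"
  proof (induction xs arbitrary: ys)
    case Nil
    then show ?case by (cases ys) auto
  next
    case (Cons x xs)
    then obtain y ys' where ys: "ys = y # ys'" by (cases ys) auto
    with Cons.prems have shifted: "map ((+) x) (prefix_sums xs) = map ((+) y) (prefix_sums ys')"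
      by simp
    then have "hd (map ((+) x) (prefix_sums xs)) = hd (map ((+) y) (prefix_sums ys'))" by simp
    then have "x = y" by (simp add: hd_map)
    with shifted Cons.IH ys show ?case by simp
  qed
qed

lemma sorted_prefix_sums: "\<forall>x\<in>set xs. 0 < x \<Longrightarrow> sorted_wrt (<) (prefix_sums xs)"
  by (induction xs) (auto simp: sorted_wrt_map le_less_trans)

lemma card_set_prefix_sums:
  "\<forall>x\<in>set xs. 0 < x \<Longrightarrow> card (set (prefix_sums xs)) = Suc (length xs)"
  using sorted_prefix_sums by (simp add: strict_sorted_iff distinct_card)

lemma sumset_insert_zero_shift:
  "sumset (insert 0 ((+) x ` B)) C = C \<union> (+) x ` sumset B C"
proof (intro equalityI subsetI)
  fix y assume "y \<in> sumset (insert 0 ((+) x ` B)) C"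
  then show "y \<in> C \<union> (+) x ` sumset B C"
    unfolding sumset_def by (auto simp: add.assoc image_iff)
next
  fix y assume "y \<in> C \<union> (+) x ` sumset B C"
  then show "y \<in> sumset (insert 0 ((+) x ` B)) C"
  proof
    assume "y \<in> C"
    moreover have "y = 0 + y" by simp
    ultimately show ?thesis unfolding sumset_def by blast
  next
    assume "y \<in> (+) x ` sumset B C"
    then obtain b c where "b \<in> B" "c \<in> C" "y = (x + b) + c"
      unfolding sumset_def by (auto simp: add.assoc)
    then show ?thesis unfolding sumset_def by blast
  qed
qed

lemma sumset_set_prefix_sums_subset:
  "sumset (set (prefix_sums xs)) {0..<h} \<subseteq> {0..<sum_list xs + h}"
  unfolding sumset_def by (auto dest: set_prefix_sums_le_sum_list)

lemma sumset_set_prefix_sums_eq_iff: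
  "sumset (set (prefix_sums xs)) {0..<h} = {0..<sum_list xs + h} \<longleftrightarrow> (\<forall>x\<in>set xs. x \<le> h)"
proof (induction xs)
  case Nil
  show ?case unfolding sumset_def by auto
next
  case (Cons x xs)
  let ?S = "sumset (set (prefix_sums xs)) {0..<h}"
  have decompose: "sumset (set (prefix_sums (x # xs))) {0..<h} = {0..<h} \<union> (+) x ` ?S"
    by (simp only: set_prefix_sums_Cons sumset_insert_zero_shift)
  show ?case
  proof
    assume covers: "sumset (set (prefix_sums (x # xs))) {0..<h} = {0..<sum_list (x # xs) + h}"
    have "x \<le> h"
    proof (rule ccontr)
      assume "\<not> x \<le> h"
      then have "h \<in> sumset (set (prefix_sums (x # xs))) {0..<h}" using covers by simp
      with \<open>\<not> x \<le> h\<close> show False unfolding decompose by auto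
    qed
    moreover have "{0..<sum_list xs + h} \<subseteq> ?S"
    proof
      fix y assume "y \<in> {0..<sum_list xs + h}"
      then have "x + y \<in> {0..<sum_list (x # xs) + h}" by simp
      then have "x + y \<in> {0..<h} \<union> (+) x ` ?S"
        by (simp only: decompose[symmetric] covers)
      then show "y \<in> ?S"
      proof
        assume "x + y \<in> {0..<h}"
        then have "0 + y \<in> ?S" unfolding sumset_def using zero_in_set_prefix_sums by fastforce
        then show ?thesis by simp
      qed auto
    qed
    ultimately show "\<forall>y\<in>set (x # xs). y \<le> h"
      using Cons.IH sumset_set_prefix_sums_subset by auto
  next
    assume "\<forall>y\<in>set (x # xs). y \<le> h"
    then have "x \<le> h" and "?S = {0..<sum_list xs + h}" using Cons.IH by auto
    then show "sumset (set (prefix_sums (x # xs))) {0..<h} = {0..<sum_list (x # xs) + h}"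
      unfolding decompose by (auto simp: image_iff intro: bexI[of _ "_ - x"])
  qed
qed

lemma ex_positive_prefix_sums_eq:
  assumes "finite B" and "0 \<in> B"
  shows "\<exists>xs. (\<forall>x\<in>set xs. 0 < x) \<and> set (prefix_sums xs) = B"
  using assms
proof (induction "card B" arbitrary: B rule: less_induct)
  case less
  show ?case
  proof (cases "B = {0}")
    case True
    then show ?thesis by (intro exI[of _ "[]"]) simp
  next
    case False
    define a where "a = Min (B - {0})"
    define B' where "B' = (\<lambda>y. y - a) ` (B - {0})"
    have fin: "finite (B - {0})" and ne: "B - {0} \<noteq> {}" using False less.prems by auto
    have "a \<in> B - {0}" unfolding a_def using Min_in[OF fin ne] .
    have a_le: "\<And>y. y \<in> B - {0} \<Longrightarrow> a \<le> y" unfolding a_def using Min_le[OF fin] .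
    have "card B' < card B"
      using card_image_le[of "B - {0}" "\<lambda>y. y - a"] less.prems card_Diff1_less[of B 0]
      unfolding B'_def by simp
    moreover have "finite B'" and "0 \<in> B'"
      unfolding B'_def using less.prems \<open>a \<in> B - {0}\<close> by auto
    ultimately obtain xs where pos: "\<forall>x\<in>set xs. 0 < x" and xs: "set (prefix_sums xs) = B'"
      using less.hyps by blast
    have "(+) a ` B' = B - {0}"
      unfolding B'_def image_image using a_le by (auto simp: image_iff)
    then have "set (prefix_sums (a # xs)) = B"
      using xs less.prems by (auto simp: set_prefix_sums_Cons)
    with pos \<open>a \<in> B - {0}\<close> show ?thesis by (intro exI[of _ "a # xs"]) auto
  qed
qed

lemma is_composition_Cons:
  "is_composition N (h # xs) \<longleftrightarrow> 0 < h \<and> (\<forall>x\<in>set xs. 0 < x) \<and> h + sum_list xs = N"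
  unfolding is_composition_def by auto

lemma headstrong_Cons: "headstrong (h # xs) \<longleftrightarrow> (\<forall>x\<in>set xs. x \<le> h)"
  unfolding headstrong_def all_set_conv_all_nth by (auto simp: less_Suc_eq_0_disj)

lemma is_divisor_atLeastAtMost_iff:
  "is_divisor B {0..n} \<longleftrightarrow>
     (\<exists>h xs. is_composition (n + 1) (h # xs) \<and> headstrong (h # xs) \<and> B = set (prefix_sums xs))"
proof
  assume "is_divisor B {0..n}"
  then obtain C where BC: "sumset B C = {0..n}" unfolding is_divisor_def by blast
  then have "0 \<in> sumset B C" by simp
  then have "0 \<in> B" and "0 \<in> C" unfolding sumset_def by auto
  have sum_le: "b + c \<le> n" if "b \<in> B" and "c \<in> C" for b c
    using that BC unfolding sumset_def
    by (metis (mono_tags, lifting) atLeastAtMost_iff mem_Collect_eq)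
  then have "finite B" using \<open>0 \<in> C\<close> by (metis add_0_right finite_nat_set_iff_bounded_le)
  then obtain xs where pos: "\<forall>x\<in>set xs. 0 < x" and B: "B = set (prefix_sums xs)"
    using ex_positive_prefix_sums_eq \<open>0 \<in> B\<close> by blast
  define h where "h = n + 1 - sum_list xs"
  have "sum_list xs \<in> B" unfolding B by (rule sum_list_in_set_prefix_sums)
  then have "C \<subseteq> {0..<h}" and "sum_list xs + h = n + 1"
    using sum_le \<open>0 \<in> C\<close> unfolding h_def by fastforce+
  moreover have "sumset B C \<subseteq> sumset B {0..<h}"
    using \<open>C \<subseteq> {0..<h}\<close> unfolding sumset_def by blast
  ultimately have "{0..<sum_list xs + h} \<subseteq> sumset B {0..<h}"
    using BC by (simp add: atLeastLessThanSuc_atLeastAtMost)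
  then have "sumset (set (prefix_sums xs)) {0..<h} = {0..<sum_list xs + h}"
    using sumset_set_prefix_sums_subset unfolding B by blast
  then have "\<forall>x\<in>set xs. x \<le> h" by (simp only: sumset_set_prefix_sums_eq_iff)
  moreover have "0 < h"
    using \<open>sum_list xs + h = n + 1\<close> sum_le[OF \<open>sum_list xs \<in> B\<close> \<open>0 \<in> C\<close>] by simp
  ultimately show
    "\<exists>h xs. is_composition (n + 1) (h # xs) \<and> headstrong (h # xs) \<and> B = set (prefix_sums xs)"
    using pos B \<open>sum_list xs + h = n + 1\<close>
    by (auto simp: is_composition_Cons headstrong_Cons add.commute)
next
  assume "\<exists>h xs. is_composition (n + 1) (h # xs) \<and> headstrong (h # xs) \<and> B = set (prefix_sums xs)"
  then obtain h xs where sum: "h + sum_list xs = n + 1" and "\<forall>x\<in>set xs. x \<le> h"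
    and "B = set (prefix_sums xs)"
    by (auto simp: is_composition_Cons headstrong_Cons)
  then have "sumset B {0..<h} = {0..<sum_list xs + h}"
    by (simp add: sumset_set_prefix_sums_eq_iff)
  also have "\<dots> = {0..n}"
    using sum by (simp add: add.commute atLeastLessThanSuc_atLeastAtMost)
  finally have "sumset B {0..<h} = {0..n}" .
  then show "is_divisor B {0..n}" unfolding is_divisor_def by blast
qed

lemma inj_on_set_prefix_sums_tl:
  "inj_on (\<lambda>cs. set (prefix_sums (tl cs))) {cs. is_composition N cs \<and> headstrong cs}"
proof (rule inj_onI)
  fix cs cs' assume "cs \<in> {cs. is_composition N cs \<and> headstrong cs}"
    and "cs' \<in> {cs. is_composition N cs \<and> headstrong cs}"
    and eq: "set (prefix_sums (tl cs)) = set (prefix_sums (tl cs'))"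
  then obtain h xs h' xs' where cs: "cs = h # xs" "h + sum_list xs = N" "\<forall>x\<in>set xs. 0 < x"
    and cs': "cs' = h' # xs'" "h' + sum_list xs' = N" "\<forall>x\<in>set xs'. 0 < x"
    unfolding headstrong_def by (auto simp: neq_Nil_conv is_composition_Cons)
  then have "prefix_sums xs = prefix_sums xs'"
    using eq strict_sorted_equal[OF sorted_prefix_sums sorted_prefix_sums] by simp
  then have "xs = xs'" using inj_prefix_sums by (simp add: inj_eq)
  with cs cs' show "cs = cs'" by simp
qed

lemma card_set_prefix_sums_tl:
  "is_composition N cs \<Longrightarrow> cs \<noteq> [] \<Longrightarrow> card (set (prefix_sums (tl cs))) = length cs"
  by (cases cs) (auto simp: is_composition_Cons card_set_prefix_sums)

theorem mainTheorem19:
  fixes n m :: nat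
  assumes "0 < m"
  shows "card {B :: nat set. is_divisor B {0..n} \<and> finite B \<and> card B = m}
       = card {cs :: nat list. is_composition (n + 1) cs \<and> headstrong cs \<and> length cs = m}"
proof -
  let ?divisor = "\<lambda>cs. set (prefix_sums (tl cs))"
  let ?H = "{cs :: nat list. is_composition (n + 1) cs \<and> headstrong cs \<and> length cs = m}"
  have "{B. is_divisor B {0..n} \<and> finite B \<and> card B = m} = ?divisor ` ?H"
  proof (intro set_eqI iffI)
    fix B assume "B \<in> {B. is_divisor B {0..n} \<and> finite B \<and> card B = m}"
    then obtain h xs where "is_composition (n + 1) (h # xs)" "headstrong (h # xs)"
      and "B = set (prefix_sums xs)" "card B = m"
      unfolding is_divisor_atLeastAtMost_iff by blast
    then show "B \<in> ?divisor ` ?H"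
      using card_set_prefix_sums_tl[of "n + 1" "h # xs"]
      by (intro image_eqI[of _ _ "h # xs"]) auto
  next
    fix B assume "B \<in> ?divisor ` ?H"
    then obtain h xs where "h # xs \<in> ?H" and "B = set (prefix_sums xs)"
      unfolding headstrong_def by (auto simp: neq_Nil_conv)
    then show "B \<in> {B. is_divisor B {0..n} \<and> finite B \<and> card B = m}"
      using card_set_prefix_sums_tl[of "n + 1" "h # xs"]
      unfolding is_divisor_atLeastAtMost_iff by auto
  qed
  moreover have "inj_on ?divisor ?H"
    using inj_on_set_prefix_sums_tl by (rule inj_on_subset) blast
  ultimately show ?thesis by (simp add: card_image)
qed

end
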